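(* Let $G$ be an index coding problem and let $G'$ be the problem obtained from $G$ by deleting all edges $i\to j$ (i.e., removing $i$ from $A_j$) that do not lie on any directed cycle of the side information graph. Then $G$ and $G'$ have the same capacity region.
   Context: Index coding: an instance with $n$ messages is specified by side information sets $A_1,\ldots,A_n$ with $A_j\subseteq[1:n]\setminus\{j\}$, equivalently a directed side information graph on $[1:n]$ with an edge $i\to j$ iff $i\in A_j$. A $(t_1,\ldots,t_n,r)$ index code (with $t_j$ nonnegative integers, $r$ a positive integer) consists of an encoder $\phi:\prod_i\{0,1\}^{t_i}\to\{0,1\}^r$ and decoders $\psi_j:\{0,1\}^r\times\prod_{k\in A_j}\{0,1\}^{t_k}\to\{0,1\}^{t_j}$ with $\psi_j(\phi(x^n),(x_k)_{k\in A_j})=x_j$ for all message tuples $x^n$ and all $j$. A nonnegative rate tuple is achievable if $R_j\le t_j/r$ for all $j$ for some such code; the capacity region is the closure of the set of achievable rate tuples. *)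

theory Defs
  imports "HOL-Analysis.Analysis"
begin

text \<open>Messages are indexed by a finite type 'n (so n = CARD('n)).
  A message tuple is x :: 'n => bool list with length (x i) = t i, i.e. x i in {0,1}^(t i).\<close>

definition well_formed_ic :: "('n::finite \<Rightarrow> 'n set) \<Rightarrow> bool" where
  "well_formed_ic A \<longleftrightarrow> (\<forall>j. j \<notin> A j)"

definition msg_tuples :: "('n::finite \<Rightarrow> nat) \<Rightarrow> ('n \<Rightarrow> bool list) set" where
  "msg_tuples t = {x. \<forall>i. length (x i) = t i}"

text \<open>A (t_1,...,t_n,r) index code: encoder phi into {0,1}^r, decoders psi j which
  see the codeword and the side information (x_k)_{k in A j}.\<close>
definition is_index_code ::
  "('n::finite \<Rightarrow> 'n set) \<Rightarrow> ('n \<Rightarrow> nat) \<Rightarrow> nat \<Rightarrow>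
   (('n \<Rightarrow> bool list) \<Rightarrow> bool list) \<Rightarrow>
   ('n \<Rightarrow> bool list \<Rightarrow> ('n \<Rightarrow> bool list) \<Rightarrow> bool list) \<Rightarrow> bool" where
  "is_index_code A t r \<phi> \<psi> \<longleftrightarrow>
     (\<forall>x\<in>msg_tuples t. length (\<phi> x) = r) \<and>
     (\<forall>x\<in>msg_tuples t. \<forall>j. \<psi> j (\<phi> x) (restrict x (A j)) = x j)"

definition index_code_exists :: "('n::finite \<Rightarrow> 'n set) \<Rightarrow> ('n \<Rightarrow> nat) \<Rightarrow> nat \<Rightarrow> bool" where
  "index_code_exists A t r \<longleftrightarrow> (\<exists>\<phi> \<psi>. is_index_code A t r \<phi> \<psi>)"

definition achievable :: "('n::finite \<Rightarrow> 'n set) \<Rightarrow> (real ^ 'n) \<Rightarrow> bool" where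
  "achievable A R \<longleftrightarrow> (\<forall>j. 0 \<le> R $ j) \<and>
     (\<exists>t r. 0 < r \<and> index_code_exists A t r \<and> (\<forall>j. R $ j \<le> real (t j) / real r))"

definition capacity_region :: "('n::finite \<Rightarrow> 'n set) \<Rightarrow> (real ^ 'n) set" where
  "capacity_region A = closure {R. achievable A R}"

definition side_graph :: "('n \<Rightarrow> 'n set) \<Rightarrow> ('n \<times> 'n) set" where
  "side_graph A = {(i, j). i \<in> A j}"

definition edge_on_cycle :: "('n \<Rightarrow> 'n set) \<Rightarrow> 'n \<Rightarrow> 'n \<Rightarrow> bool" where
  "edge_on_cycle A i j \<longleftrightarrow> (i, j) \<in> side_graph A \<and> (j, i) \<in> (side_graph A)\<^sup>*"

definition prune_acyclic_edges :: "('n \<Rightarrow> 'n set) \<Rightarrow> 'n \<Rightarrow> 'n set" where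
  "prune_acyclic_edges A j = {i. edge_on_cycle A i j}"

end

theory Submission
  imports Defs
begin

text \<open>An edge \<open>i \<rightarrow> j\<close> on no cycle leaves the set \<open>U\<close> of vertices not reachable from \<open>j\<close>,
  and no edge enters \<open>U\<close>: the side information of receivers in \<open>U\<close> lies in \<open>U\<close>. For such a
  set, all edges leaving \<open>U\<close> can be dropped at no cost in capacity, and dropping them changes
  neither the cycles nor the pruned problem; induction on the number of edges gives the theorem.

  To drop the edges leaving \<open>U\<close>, take a decodable encoder \<open>\<phi>\<close> for \<open>k\<close> independent blocks. The
  receivers in \<open>U\<close> are served by a tuple of codewords consistent with the \<open>U\<close>-parts of the blocks,
  taken from a small family found by greedy set cover; the receivers outside \<open>U\<close> get, for
  each block, the codeword of the block with its \<open>U\<close>-part replaced by a fixed \<open>z\<close>, which they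
  decode without side information from \<open>U\<close>. This costs only a factor polynomial in \<open>k\<close> over
  \<open>k\<close> uses of \<open>\<phi>\<close>, so the rate loss vanishes as \<open>k \<rightarrow> \<infinity>\<close>.\<close>

lemma finite_bool_lists_length_eq: "finite {bs :: bool list. length bs = n}"
  using finite_lists_length_eq[of "UNIV :: bool set" n] by simp

lemma card_bool_lists_length_eq: "card {bs :: bool list. length bs = n} = 2 ^ n"
  using card_lists_length_eq[of "UNIV :: bool set" n] by simp

lemma finite_msg_tuples [simp]: "finite (msg_tuples (t :: 'n::finite \<Rightarrow> nat))"
proof -
  have "msg_tuples t = PiE UNIV (\<lambda>i. {bs :: bool list. length bs = t i})"
    unfolding msg_tuples_def by (auto simp: PiE_def extensional_def)
  then show ?thesis by (simp add: finite_PiE finite_bool_lists_length_eq)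
qed

definition decodable :: "('n::finite \<Rightarrow> 'n set) \<Rightarrow> ('n \<Rightarrow> nat) \<Rightarrow> (('n \<Rightarrow> bool list) \<Rightarrow> 'c) \<Rightarrow> bool" where
  "decodable A t c \<longleftrightarrow> (\<forall>x\<in>msg_tuples t. \<forall>y\<in>msg_tuples t. c x = c y \<longrightarrow>
      (\<forall>j. (\<forall>i\<in>A j. x i = y i) \<longrightarrow> x j = y j))"

lemma decodableD:
  "decodable A t c \<Longrightarrow> x \<in> msg_tuples t \<Longrightarrow> y \<in> msg_tuples t \<Longrightarrow> c x = c y \<Longrightarrow>
    (\<And>i. i \<in> A j \<Longrightarrow> x i = y i) \<Longrightarrow> x j = y j"
  unfolding decodable_def by blast

lemma restrict_eq_iff: "restrict x S = restrict y S \<longleftrightarrow> (\<forall>i\<in>S. x i = y i)"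
  by (metis restrict_apply' restrict_ext)

lemma decodable_encoder_if_index_code:
  fixes A :: "'n::finite \<Rightarrow> 'n set"
  assumes "index_code_exists A t r"
  obtains \<phi> :: "('n::finite \<Rightarrow> bool list) \<Rightarrow> bool list"
  where "decodable A t \<phi>" "card (\<phi> ` msg_tuples t) \<le> 2 ^ r"
proof -
  obtain \<phi> \<psi> where code: "is_index_code A t r \<phi> \<psi>"
    using assms unfolding index_code_exists_def by blast
  have "decodable A t \<phi>"
    unfolding decodable_def
  proof (intro ballI impI allI)
    fix x y j assume "x \<in> msg_tuples t" "y \<in> msg_tuples t" "\<phi> x = \<phi> y" "\<forall>i\<in>A j. x i = y i"
    then show "x j = y j"
      using code restrict_eq_iff[of x "A j" y] unfolding is_index_code_def by metis
  qed
  moreover have "\<phi> ` msg_tuples t \<subseteq> {bs. length bs = r}"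
    using code unfolding is_index_code_def by auto
  then have "card (\<phi> ` msg_tuples t) \<le> 2 ^ r"
    using card_mono[OF finite_bool_lists_length_eq] card_bool_lists_length_eq by metis
  ultimately show thesis by (rule that)
qed

lemma index_code_exists_if_decodable:
  fixes c :: "('n::finite \<Rightarrow> bool list) \<Rightarrow> 'c"
  assumes dec: "decodable A t c" and card: "card (c ` msg_tuples t) \<le> 2 ^ r"
  shows "index_code_exists A t r"
proof -
  let ?M = "msg_tuples t"
  have "card (c ` ?M) \<le> card {bs :: bool list. length bs = r}"
    using card by (simp add: card_bool_lists_length_eq)
  then obtain e :: "'c \<Rightarrow> bool list"
    where e: "e ` c ` ?M \<subseteq> {bs. length bs = r}" "inj_on e (c ` ?M)"
    using card_le_inj[OF _ finite_bool_lists_length_eq] finite_msg_tuples by (metis finite_imageI)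
  define \<phi> where "\<phi> x = e (c x)" for x
  define \<psi> where "\<psi> j w s = (SOME v. \<exists>x\<in>?M. \<phi> x = w \<and> restrict x (A j) = s \<and> v = x j)" for j w s
  have "is_index_code A t r \<phi> \<psi>"
    unfolding is_index_code_def
  proof (intro conjI ballI allI)
    fix x j assume x: "x \<in> ?M"
    show "length (\<phi> x) = r" using e x unfolding \<phi>_def by auto
    have "v = x j" if "\<exists>x'\<in>?M. \<phi> x' = \<phi> x \<and> restrict x' (A j) = restrict x (A j) \<and> v = x' j" for v
    proof -
      from that obtain x' where x': "x' \<in> ?M" "\<phi> x' = \<phi> x"
        "restrict x' (A j) = restrict x (A j)" "v = x' j"
        by blast
      have "c x' = c x" using x' x e(2) unfolding \<phi>_def inj_on_def by blast
      with x' x show ?thesis using decodableD[OF dec] restrict_eq_iff by metis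
    qed
    then show "\<psi> j (\<phi> x) (restrict x (A j)) = x j"
      unfolding \<psi>_def using someI_ex[of "\<lambda>v. \<exists>x'\<in>?M. \<phi> x' = \<phi> x \<and> restrict x' (A j) = restrict x (A j) \<and> v = x' j"] x
      by blast
  qed
  then show ?thesis unfolding index_code_exists_def by blast
qed

lemma achievable_mono:
  fixes A B :: "'n::finite \<Rightarrow> 'n set"
  assumes "achievable B R" "\<And>j. B j \<subseteq> A j"
  shows "achievable A R"
proof -
  obtain t r where R: "\<forall>j. 0 \<le> R $ j" "0 < r" "index_code_exists B t r" "\<forall>j. R $ j \<le> real (t j) / real r"
    using assms(1) unfolding achievable_def by blast
  obtain \<phi> :: "('n \<Rightarrow> bool list) \<Rightarrow> bool list"
    where "decodable B t \<phi>" "card (\<phi> ` msg_tuples t) \<le> 2 ^ r"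
    using decodable_encoder_if_index_code[OF R(3)] .
  moreover have "decodable A t \<phi>"
    using \<open>decodable B t \<phi>\<close> assms(2) unfolding decodable_def by blast
  ultimately have "index_code_exists A t r" using index_code_exists_if_decodable by blast
  then show ?thesis using R unfolding achievable_def by blast
qed

lemma capacity_region_mono:
  "(\<And>j. B j \<subseteq> A j) \<Longrightarrow> capacity_region B \<subseteq> capacity_region A"
  unfolding capacity_region_def by (intro closure_mono) (auto intro: achievable_mono)

lemma exists_heavy_set:
  fixes S :: "'i \<Rightarrow> 'x set" and p :: real
  assumes I: "finite I" "I \<noteq> {}" and X: "finite X"
    and cov: "\<And>x. x \<in> X \<Longrightarrow> p * card I \<le> card {i\<in>I. x \<in> S i}"
  obtains i where "i \<in> I" "p * card X \<le> card (X \<inter> S i)"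
proof -
  have "(\<Sum>i\<in>I. real (card (X \<inter> S i))) = (\<Sum>i\<in>I. \<Sum>x\<in>X. of_bool (x \<in> S i))"
    using X by simp
  also have "\<dots> = (\<Sum>x\<in>X. \<Sum>i\<in>I. of_bool (x \<in> S i))"
    by (rule sum.swap)
  also have "\<dots> = (\<Sum>x\<in>X. real (card {i\<in>I. x \<in> S i}))"
    using I by (simp add: Collect_conj_eq Int_commute)
  also have "\<dots> \<ge> (\<Sum>x\<in>X. p * card I)"
    using cov by (intro sum_mono) auto
  finally have total: "card I * (p * card X) \<le> (\<Sum>i\<in>I. real (card (X \<inter> S i)))"
    by (simp add: algebra_simps)
  show thesis
  proof (rule ccontr)
    assume "\<not> thesis"
    then have "\<forall>i\<in>I. real (card (X \<inter> S i)) < p * card X" using that by force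
    then have "(\<Sum>i\<in>I. real (card (X \<inter> S i))) < (\<Sum>i\<in>I. p * card X)"
      using I by (intro sum_strict_mono) auto
    with total show False by simp
  qed
qed

text \<open>Each greedy step removes a set containing a fraction \<open>p\<close> of the points not yet covered.\<close>
lemma greedy_set_cover:
  fixes S :: "'i \<Rightarrow> 'x set" and p :: real
  assumes I: "finite I" "I \<noteq> {}" and p: "p \<le> 1"
  shows "finite X \<Longrightarrow> (\<And>x. x \<in> X \<Longrightarrow> p * card I \<le> card {i\<in>I. x \<in> S i}) \<Longrightarrow>
    card X * (1 - p) ^ s < 1 \<Longrightarrow> \<exists>F\<subseteq>I. X \<subseteq> (\<Union>i\<in>F. S i) \<and> card F \<le> s"
proof (induction s arbitrary: X)
  case 0
  then show ?case by (intro exI[of _ "{}"]) auto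
next
  case (Suc s)
  obtain i where i: "i \<in> I" "p * card X \<le> card (X \<inter> S i)"
    using exists_heavy_set[OF I Suc.prems(1,2)] by blast
  have "card (X - S i) = card X - card (X \<inter> S i)"
    using Suc.prems(1) by (metis card_Diff_subset_Int finite_Int)
  then have "real (card (X - S i)) \<le> (1 - p) * card X"
    using i(2) Suc.prems(1) by (simp add: of_nat_diff card_mono algebra_simps)
  then have "card (X - S i) * (1 - p) ^ s \<le> (1 - p) * card X * (1 - p) ^ s"
    using p by (simp add: mult_right_mono)
  also have "\<dots> = card X * (1 - p) ^ Suc s"
    by (simp add: mult_ac)
  finally have "\<exists>F\<subseteq>I. X - S i \<subseteq> (\<Union>i\<in>F. S i) \<and> card F \<le> s"
    using Suc.prems by (intro Suc.IH) auto
  then obtain F where F: "F \<subseteq> I" "X - S i \<subseteq> (\<Union>i\<in>F. S i)" "card F \<le> s"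
    by blast
  have "card (insert i F) \<le> Suc s"
    using F(3) card_insert_le_m1[of "Suc s" F i] by simp
  with F i(1) show ?case by (intro exI[of _ "insert i F"]) auto
qed

lemma greedy_set_cover_size:
  fixes S :: "'i \<Rightarrow> 'x set" and p :: real
  assumes I: "finite I" "I \<noteq> {}" and p: "0 < p" "p \<le> 1" "1 \<le> p * q"
    and X: "finite X" "card X \<le> 2 ^ b"
    and cov: "\<And>x. x \<in> X \<Longrightarrow> p * card I \<le> card {i\<in>I. x \<in> S i}"
  obtains F where "F \<subseteq> I" "X \<subseteq> (\<Union>i\<in>F. S i)" "card F \<le> (b + 1) * q"
proof -
  have "(1 - p) ^ q \<le> exp (- p) ^ q"
    using p exp_ge_add_one_self[of "-p"] by (intro power_mono) auto
  also have "\<dots> = exp (- (p * q))"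
    by (metis exp_of_nat_mult mult.commute mult_minus_right)
  also have "\<dots> \<le> exp (-1)"
    using p(3) by simp
  also have "\<dots> \<le> 1 / 2"
    using exp_ge_add_one_self[of 1] by (simp add: exp_minus field_simps)
  finally have "(1 - p) ^ q \<le> 1 / 2" .
  then have "((1 - p) ^ q) ^ (b + 1) \<le> (1 / 2) ^ (b + 1)"
    using p(2) by (intro power_mono) auto
  then have "(1 - p) ^ ((b + 1) * q) \<le> (1 / 2) ^ (b + 1)"
    by (simp only: power_mult[symmetric] mult.commute)
  moreover have "real (card X) \<le> 2 ^ b"
    using X(2) by (metis of_nat_le_iff of_nat_numeral of_nat_power)
  ultimately have "card X * (1 - p) ^ ((b + 1) * q) \<le> 2 ^ b * (1 / 2) ^ (b + 1)"
    using p(2) by (intro mult_mono) auto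
  also have "\<dots> < 1"
    by (simp add: power_one_over)
  finally show thesis
    using greedy_set_cover[OF I p(2) X(1) cov] that by blast
qed

lemma div_plus_one_bounds:
  fixes a b :: nat
  assumes "0 < a" "a \<le> b"
  shows "b \<le> a * (b div a + 1)" "(b div a + 1) * a \<le> 2 * b"
proof -
  have "b = a * (b div a) + b mod a" "b mod a < a"
    using assms(1) by simp_all
  then show "b \<le> a * (b div a + 1)"
    unfolding distrib_left by linarith
  show "(b div a + 1) * a \<le> 2 * b"
    using div_times_less_eq_dividend[of b a] assms(2) unfolding distrib_right mult_1 by linarith
qed

lemma card_PiE_hitting:
  assumes cov: "\<And>a. a \<in> X \<Longrightarrow> m \<le> card {c\<in>C. a \<in> S c}" and \<xi>: "\<xi> \<in> PiE {..<k} (\<lambda>_. X)"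
  shows "m ^ k \<le> card {cc \<in> PiE {..<k} (\<lambda>_. C). \<forall>l<k. \<xi> l \<in> S (cc l)}"
proof -
  have "m \<le> card {c\<in>C. \<xi> l \<in> S c}" if "l < k" for l
    using cov \<xi> that by (simp add: PiE_iff)
  then have "m ^ k \<le> (\<Prod>l<k. card {c\<in>C. \<xi> l \<in> S c})"
    using prod_mono[of "{..<k}" "\<lambda>_. m"] by simp
  also have "\<dots> = card (PiE {..<k} (\<lambda>l. {c\<in>C. \<xi> l \<in> S c}))"
    by (simp add: card_PiE)
  also have "PiE {..<k} (\<lambda>l. {c\<in>C. \<xi> l \<in> S c}) = {cc \<in> PiE {..<k} (\<lambda>_. C). \<forall>l<k. \<xi> l \<in> S (cc l)}"
    by (rule set_eqI) (simp add: PiE_iff, blast)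
  finally show ?thesis .
qed

lemma card_PiE_lessThan_le_power_two: "card (PiE {..<k} (\<lambda>_. X)) \<le> 2 ^ (k * card X)"
proof -
  have "card (PiE {..<k} (\<lambda>_. X)) = card X ^ k"
    by (simp add: card_PiE)
  also have "\<dots> \<le> (2 ^ card X) ^ k"
    using less_exp[of "card X"] by (simp add: power_mono)
  finally show ?thesis
    by (simp add: power_mult[symmetric] mult.commute)
qed

lemma product_set_cover:
  fixes S :: "'c \<Rightarrow> 'a set" and k :: nat
  assumes C: "finite C" and X: "finite X" "X \<noteq> {}" and m: "0 < m"
    and cov: "\<And>a. a \<in> X \<Longrightarrow> m \<le> card {c\<in>C. a \<in> S c}"
  obtains F where "F \<subseteq> PiE {..<k} (\<lambda>_. C)"
    "\<forall>\<xi>\<in>PiE {..<k} (\<lambda>_. X). \<exists>cc\<in>F. \<forall>l<k. \<xi> l \<in> S (cc l)"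
    "card F * m ^ k \<le> 2 * (k * card X + 1) * card C ^ k"
proof -
  define I where "I = PiE {..<k} (\<lambda>_. C)"
  define Xk where "Xk = PiE {..<k} (\<lambda>_. X)"
  define SS where "SS cc = {\<xi>. \<forall>l<k. \<xi> l \<in> S (cc l)}" for cc
  have mC: "m \<le> card C"
  proof -
    obtain a where "a \<in> X" using X(2) by blast
    then show ?thesis using cov card_mono[OF C, of "{c\<in>C. a \<in> S c}"] by fastforce
  qed
  have finI: "finite I" and cardI: "card I = card C ^ k"
    unfolding I_def using C by (simp_all add: finite_PiE card_PiE)
  have Ine: "I \<noteq> {}"
    unfolding I_def using mC m by (auto simp: PiE_eq_empty_iff)
  have finXk: "finite Xk" and cardXk: "card Xk \<le> 2 ^ (k * card X)"
    unfolding Xk_def using X(1) card_PiE_lessThan_le_power_two by (simp_all add: finite_PiE)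
  define p :: real where "p = m ^ k / card C ^ k"
  define q where "q = card C ^ k div m ^ k + 1"
  have Cpos: "0 < card C ^ k" and mkC: "m ^ k \<le> card C ^ k"
    using mC m by (simp_all add: power_mono)
  have p: "0 < p" "p \<le> 1"
    using Cpos mkC m unfolding p_def by (simp_all flip: of_nat_power)
  have "real (card C ^ k) \<le> real (m ^ k) * real q"
    using div_plus_one_bounds(1)[OF _ mkC] m unfolding q_def by (metis of_nat_le_iff of_nat_mult zero_less_power)
  then have pq: "1 \<le> p * q"
    using Cpos unfolding p_def by (simp add: field_simps)
  have covk: "p * card I \<le> card {cc\<in>I. \<xi> \<in> SS cc}" if "\<xi> \<in> Xk" for \<xi>
  proof -
    have "m ^ k \<le> card {cc\<in>I. \<xi> \<in> SS cc}"
      using card_PiE_hitting[OF cov that[unfolded Xk_def]] unfolding I_def SS_def by simp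
    moreover have "p * card I = m ^ k"
      using Cpos by (simp add: p_def cardI)
    ultimately show ?thesis
      by (metis of_nat_le_iff of_nat_power)
  qed
  obtain F where F: "F \<subseteq> I" "Xk \<subseteq> (\<Union>cc\<in>F. SS cc)" "card F \<le> (k * card X + 1) * q"
    by (rule greedy_set_cover_size[OF finI Ine p pq finXk cardXk covk])
  have "card F * m ^ k \<le> (k * card X + 1) * (q * m ^ k)"
    using F(3) by (metis mult.assoc mult_le_mono1)
  also have "\<dots> \<le> (k * card X + 1) * (2 * card C ^ k)"
    using div_plus_one_bounds(2)[OF _ mkC] m unfolding q_def by (intro mult_left_mono) simp_all
  also have "\<dots> = 2 * (k * card X + 1) * card C ^ k"
    by (simp add: mult_ac)
  finally have "card F * m ^ k \<le> 2 * (k * card X + 1) * card C ^ k" .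
  show thesis
  proof (rule that)
    show "F \<subseteq> PiE {..<k} (\<lambda>_. C)"
      using F(1) unfolding I_def .
    show "\<forall>\<xi>\<in>PiE {..<k} (\<lambda>_. X). \<exists>cc\<in>F. \<forall>l<k. \<xi> l \<in> S (cc l)"
      using F(2) unfolding Xk_def SS_def by blast
  qed fact
qed

lemma tendsto_exp_over_exp_plus_linear:
  fixes r c :: nat
  assumes "0 < r"
  shows "(\<lambda>n. real (r * 2 ^ n) / real (r * 2 ^ n + n + c)) \<longlonglongrightarrow> 1"
proof -
  have "(\<lambda>n. (real n / 2 ^ n + real c / 2 ^ n) / real r) \<longlonglongrightarrow> (0 + 0) / real r"
    using lim_n_over_pown[of "2::real"] LIMSEQ_divide_realpow_zero[of 2 "real c"]
    using assms by (intro tendsto_intros) auto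
  then have "(\<lambda>n. 1 / (1 + (real n / 2 ^ n + real c / 2 ^ n) / real r)) \<longlonglongrightarrow> 1 / (1 + 0)"
    by (intro tendsto_intros) auto
  moreover have "1 / (1 + (real n / 2 ^ n + real c / 2 ^ n) / real r) =
      real (r * 2 ^ n) / real (r * 2 ^ n + n + c)" for n
    using assms by (simp add: field_simps)
  ultimately show ?thesis by simp
qed

definition block :: "('n \<Rightarrow> nat) \<Rightarrow> nat \<Rightarrow> ('n \<Rightarrow> bool list) \<Rightarrow> 'n \<Rightarrow> bool list" where
  "block t l x j = take (t j) (drop (l * t j) (x j))"

lemma block_in_msg_tuples:
  assumes "x \<in> msg_tuples (\<lambda>j. k * t j)" "l < k"
  shows "block t l x \<in> msg_tuples t"
proof -
  have "t j \<le> k * t j - l * t j" for j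
    using mult_le_mono1[of "Suc l" k "t j"] assms(2) by simp
  then show ?thesis
    using assms(1) unfolding msg_tuples_def block_def by simp
qed

lemma list_eq_if_chunks_eq:
  assumes "length xs = k * n" "length ys = k * n"
    and "\<And>l. l < k \<Longrightarrow> take n (drop (l * n) xs) = take n (drop (l * n) ys)"
  shows "xs = ys"
proof (rule nth_equalityI)
  show "length xs = length ys" using assms by simp
  fix p assume "p < length xs"
  then have p: "p < k * n" using assms by simp
  then have "0 < n" by (cases n) auto
  then have l: "p div n < k" and q: "p mod n < n" and "p = p div n * n + p mod n"
    using p by (simp_all add: div_less_iff_less_mult mult.commute)
  then have "take n (drop (p div n * n) zs) ! (p mod n) = zs ! p" if "length zs = k * n" for zs :: "'a list"
    using p that by (simp add: nth_take nth_drop)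
  then show "xs ! p = ys ! p"
    using assms l by metis
qed

lemma eq_if_blocks_eq:
  assumes "x \<in> msg_tuples (\<lambda>j. k * t j)" "y \<in> msg_tuples (\<lambda>j. k * t j)"
    and "\<And>l. l < k \<Longrightarrow> block t l x j = block t l y j"
  shows "x j = y j"
  using assms list_eq_if_chunks_eq[of "x j" k "t j" "y j"] unfolding msg_tuples_def block_def by auto

definition drop_leaving_edges :: "'n set \<Rightarrow> ('n \<Rightarrow> 'n set) \<Rightarrow> 'n \<Rightarrow> 'n set" where
  "drop_leaving_edges U A j = (if j \<in> U then A j else A j - U)"

locale closed_side_info =
  fixes A :: "'n::finite \<Rightarrow> 'n set" and U :: "'n set" and t :: "'n \<Rightarrow> nat"
    and \<phi> :: "('n \<Rightarrow> bool list) \<Rightarrow> 'c"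
  assumes closed: "\<And>u. u \<in> U \<Longrightarrow> A u \<subseteq> U"
    and decodable: "decodable A t \<phi>"
begin

abbreviation M :: "('n \<Rightarrow> bool list) set" where
  "M \<equiv> msg_tuples t"

definition U_parts :: "('n \<Rightarrow> bool list) set" where
  "U_parts = (\<lambda>x. restrict x U) ` M"

definition codewords_of :: "('n \<Rightarrow> bool list) \<Rightarrow> 'c set" where
  "codewords_of a = \<phi> ` {x\<in>M. restrict x U = a}"

definition merge :: "('n \<Rightarrow> bool list) \<Rightarrow> ('n \<Rightarrow> bool list) \<Rightarrow> 'n \<Rightarrow> bool list" where
  "merge z x j = (if j \<in> U then z j else x j)"

lemma merge_in_msg_tuples: "z \<in> M \<Longrightarrow> x \<in> M \<Longrightarrow> merge z x \<in> M"
  unfolding merge_def msg_tuples_def by auto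

lemma codewords_of_subset: "codewords_of a \<subseteq> \<phi> ` M"
  unfolding codewords_of_def by auto

lemma decode_inside:
  assumes "j \<in> U" and x: "x \<in> M" "c \<in> codewords_of (restrict x U)"
    and y: "y \<in> M" "c \<in> codewords_of (restrict y U)"
    and agree: "\<And>i. i \<in> A j \<Longrightarrow> x i = y i"
  shows "x j = y j"
proof -
  obtain x' where x': "x' \<in> M" "restrict x' U = restrict x U" "\<phi> x' = c"
    using x(2) unfolding codewords_of_def by auto
  obtain y' where y': "y' \<in> M" "restrict y' U = restrict y U" "\<phi> y' = c"
    using y(2) unfolding codewords_of_def by auto
  have xU: "\<forall>i\<in>U. x' i = x i" and yU: "\<forall>i\<in>U. y' i = y i"
    using x'(2) y'(2) unfolding restrict_eq_iff by blast+
  have "\<phi> x' = \<phi> y'"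
    using x'(3) y'(3) by simp
  moreover have "x' i = y' i" if "i \<in> A j" for i
    using that agree closed[OF \<open>j \<in> U\<close>] xU yU by auto
  ultimately have "x' j = y' j"
    by (rule decodableD[OF decodable x'(1) y'(1)])
  then show ?thesis
    using xU yU \<open>j \<in> U\<close> by auto
qed

lemma decode_outside:
  assumes "j \<notin> U" "z \<in> M" "x \<in> M" "y \<in> M" "\<phi> (merge z x) = \<phi> (merge z y)"
    and agree: "\<And>i. i \<in> A j - U \<Longrightarrow> x i = y i"
  shows "x j = y j"
proof -
  have "merge z x i = merge z y i" if "i \<in> A j" for i
    using that agree unfolding merge_def by auto
  then have "merge z x j = merge z y j"
    using decodableD[OF decodable] merge_in_msg_tuples assms(2-5) by blast
  then show ?thesis
    using \<open>j \<notin> U\<close> unfolding merge_def by simp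
qed

lemma card_merge_image:
  assumes "z \<in> M"
  shows "card ((\<lambda>x. \<phi> (merge z x)) ` M) \<le> card (codewords_of (restrict z U))"
proof (rule card_mono)
  show "finite (codewords_of (restrict z U))"
    using codewords_of_subset by (rule finite_subset) simp
  have "restrict (merge z x) U = restrict z U" for x
    unfolding merge_def by (auto simp: restrict_def)
  then show "(\<lambda>x. \<phi> (merge z x)) ` M \<subseteq> codewords_of (restrict z U)"
    unfolding codewords_of_def using merge_in_msg_tuples[OF assms] by auto
qed

definition block_colouring ::
  "nat \<Rightarrow> (nat \<Rightarrow> 'c) set \<Rightarrow> ('n \<Rightarrow> bool list) \<Rightarrow> ('n \<Rightarrow> bool list) \<Rightarrow> (nat \<Rightarrow> 'c) \<times> (nat \<Rightarrow> 'c)"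
  where
  "block_colouring k F z x =
    (SOME cc. cc \<in> F \<and> (\<forall>l<k. cc l \<in> codewords_of (restrict (block t l x) U)),
     \<lambda>l\<in>{..<k}. \<phi> (merge z (block t l x)))"

context
  fixes k :: nat and F :: "(nat \<Rightarrow> 'c) set" and z :: "'n \<Rightarrow> bool list"
  assumes z: "z \<in> M"
    and cover: "\<And>x. x \<in> msg_tuples (\<lambda>j. k * t j) \<Longrightarrow>
      \<exists>cc\<in>F. \<forall>l<k. cc l \<in> codewords_of (restrict (block t l x) U)"
begin

lemma fst_block_colouring:
  assumes "x \<in> msg_tuples (\<lambda>j. k * t j)"
  shows "fst (block_colouring k F z x) \<in> F"
    "\<And>l. l < k \<Longrightarrow> fst (block_colouring k F z x) l \<in> codewords_of (restrict (block t l x) U)"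
  using someI_ex[OF cover[OF assms, unfolded Bex_def]] unfolding block_colouring_def by auto

lemma decodable_block_colouring:
  "decodable (drop_leaving_edges U A) (\<lambda>j. k * t j) (block_colouring k F z)"
  unfolding decodable_def
proof (intro ballI impI allI)
  fix x y j
  assume x: "x \<in> msg_tuples (\<lambda>j. k * t j)" and y: "y \<in> msg_tuples (\<lambda>j. k * t j)"
    and same: "block_colouring k F z x = block_colouring k F z y"
    and agree: "\<forall>i\<in>drop_leaving_edges U A j. x i = y i"
  have "block t l x j = block t l y j" if l: "l < k" for l
  proof (cases "j \<in> U")
    case True
    then show ?thesis
      using decode_inside[OF True block_in_msg_tuples[OF x l] fst_block_colouring(2)[OF x l]
          block_in_msg_tuples[OF y l]] fst_block_colouring(2)[OF y l] same agree
      by (simp add: drop_leaving_edges_def block_def)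
  next
    case False
    have "\<phi> (merge z (block t l x)) = \<phi> (merge z (block t l y))"
      using arg_cong[OF same, of "\<lambda>c. snd c l"] l unfolding block_colouring_def by simp
    then show ?thesis
      using decode_outside[OF False z block_in_msg_tuples[OF x l] block_in_msg_tuples[OF y l]]
        agree False by (simp add: drop_leaving_edges_def block_def)
  qed
  then show "x j = y j"
    using eq_if_blocks_eq[OF x y] by blast
qed

lemma card_block_colouring:
  assumes "finite F"
  shows "card (block_colouring k F z ` msg_tuples (\<lambda>j. k * t j))
    \<le> card F * card (codewords_of (restrict z U)) ^ k"
proof -
  let ?W = "(\<lambda>x. \<phi> (merge z x)) ` M"
  have "block_colouring k F z x \<in> F \<times> PiE {..<k} (\<lambda>_. ?W)"
    if "x \<in> msg_tuples (\<lambda>j. k * t j)" for x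
    using fst_block_colouring(1)[OF that] block_in_msg_tuples[OF that]
    by (simp add: block_colouring_def restrict_PiE_iff)
  then have "block_colouring k F z ` msg_tuples (\<lambda>j. k * t j) \<subseteq> F \<times> PiE {..<k} (\<lambda>_. ?W)"
    by blast
  moreover have "finite (F \<times> PiE {..<k} (\<lambda>_. ?W))"
    using assms by (simp add: finite_PiE)
  ultimately have "card (block_colouring k F z ` msg_tuples (\<lambda>j. k * t j))
      \<le> card (F \<times> PiE {..<k} (\<lambda>_. ?W))"
    by (intro card_mono)
  also have "\<dots> = card F * card ?W ^ k"
    by (simp add: card_cartesian_product card_PiE)
  also have "\<dots> \<le> card F * card (codewords_of (restrict z U)) ^ k"
    using card_merge_image[OF z] by (simp add: power_mono)
  finally show ?thesis .
qed

end

lemma finite_U_parts: "finite U_parts"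
  unfolding U_parts_def by (intro finite_imageI finite_msg_tuples)

lemma U_parts_nonempty: "U_parts \<noteq> {}"
proof -
  have "(\<lambda>j. replicate (t j) False) \<in> M"
    unfolding msg_tuples_def by simp
  then show ?thesis
    unfolding U_parts_def by blast
qed

lemma exists_fewest_codewords:
  obtains z where "z \<in> M" "0 < card (codewords_of (restrict z U))"
    "\<And>a. a \<in> U_parts \<Longrightarrow> card (codewords_of (restrict z U)) \<le> card (codewords_of a)"
proof -
  define m where "m = Min ((\<lambda>a. card (codewords_of a)) ` U_parts)"
  have "m \<in> (\<lambda>a. card (codewords_of a)) ` U_parts"
    using finite_U_parts U_parts_nonempty unfolding m_def by (intro Min_in) auto
  then obtain z where z: "z \<in> M" "card (codewords_of (restrict z U)) = m"
    unfolding U_parts_def by auto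
  have "\<phi> z \<in> codewords_of (restrict z U)"
    using z(1) unfolding codewords_of_def by auto
  moreover have "finite (codewords_of (restrict z U))"
    using codewords_of_subset by (rule finite_subset) simp
  ultimately have "0 < card (codewords_of (restrict z U))"
    using card_gt_0_iff by blast
  moreover have "m \<le> card (codewords_of a)" if "a \<in> U_parts" for a
    using finite_U_parts that unfolding m_def by simp
  ultimately show thesis
    using that z by auto
qed

text \<open>Take \<open>z\<close> with the fewest consistent codewords, \<open>m\<close> say. Every \<open>U\<close>-part is consistent
  with at least \<open>m\<close> codewords, so about \<open>(card (\<phi> ` M) / m) ^ k\<close> codeword tuples cover all
  \<open>U\<close>-parts of \<open>k\<close> blocks, which pays for the \<open>m ^ k\<close> codewords sent to the receivers
  outside \<open>U\<close>.\<close>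
lemma small_block_colouring:
  obtains col :: "('n \<Rightarrow> bool list) \<Rightarrow> (nat \<Rightarrow> 'c) \<times> (nat \<Rightarrow> 'c)"
  where "decodable (drop_leaving_edges U A) (\<lambda>j. k * t j) col"
    "card (col ` msg_tuples (\<lambda>j. k * t j)) \<le> 2 * (k * card U_parts + 1) * card (\<phi> ` M) ^ k"
proof -
  obtain z where z: "z \<in> M" "0 < card (codewords_of (restrict z U))"
    and m_le: "\<And>a. a \<in> U_parts \<Longrightarrow> card (codewords_of (restrict z U)) \<le> card (codewords_of a)"
    using exists_fewest_codewords by blast
  define m where "m = card (codewords_of (restrict z U))"
  have "{c\<in>\<phi> ` M. a \<in> {a. c \<in> codewords_of a}} = codewords_of a" for a
    using codewords_of_subset by auto
  then have cov: "m \<le> card {c\<in>\<phi> ` M. a \<in> {a. c \<in> codewords_of a}}" if "a \<in> U_parts" for a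
    using m_le[OF that] unfolding m_def by simp
  obtain F where F: "F \<subseteq> PiE {..<k} (\<lambda>_. \<phi> ` M)"
    "\<forall>\<xi>\<in>PiE {..<k} (\<lambda>_. U_parts). \<exists>cc\<in>F. \<forall>l<k. \<xi> l \<in> {a. cc l \<in> codewords_of a}"
    "card F * m ^ k \<le> 2 * (k * card U_parts + 1) * card (\<phi> ` M) ^ k"
    using product_set_cover[where k = k, OF finite_imageI[OF finite_msg_tuples] finite_U_parts
        U_parts_nonempty z(2)[folded m_def] cov] .
  have cover: "\<exists>cc\<in>F. \<forall>l<k. cc l \<in> codewords_of (restrict (block t l x) U)"
    if "x \<in> msg_tuples (\<lambda>j. k * t j)" for x
  proof -
    have "(\<lambda>l\<in>{..<k}. restrict (block t l x) U) \<in> PiE {..<k} (\<lambda>_. U_parts)"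
      using block_in_msg_tuples[OF that] unfolding U_parts_def by (simp add: restrict_PiE_iff)
    from bspec[OF F(2) this] show ?thesis
      by simp
  qed
  have "finite F"
    using F(1) finite_msg_tuples by (meson finite_PiE finite_imageI finite_lessThan finite_subset)
  show thesis
  proof (rule that)
    show "decodable (drop_leaving_edges U A) (\<lambda>j. k * t j) (block_colouring k F z)"
      by (rule decodable_block_colouring[OF z(1) cover])
    show "card (block_colouring k F z ` msg_tuples (\<lambda>j. k * t j))
        \<le> 2 * (k * card U_parts + 1) * card (\<phi> ` M) ^ k"
      using card_block_colouring[OF z(1) cover \<open>finite F\<close>] F(3) unfolding m_def by linarith
  qed
qed

end

lemma block_code_size_le:
  fixes C N :: nat
  assumes "C \<le> 2 ^ r"
  shows "2 * (2 ^ n * N + 1) * C ^ 2 ^ n \<le> 2 ^ (r * 2 ^ n + n + (N + 1))"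
proof -
  have "N + 1 \<le> 2 ^ N"
    using less_exp[of N] by (simp add: Suc_le_eq)
  have "2 ^ n * N + 1 \<le> 2 ^ n * (N + 1)"
    by simp
  also have "\<dots> \<le> 2 ^ n * 2 ^ N"
    using \<open>N + 1 \<le> 2 ^ N\<close> by (rule mult_left_mono) simp
  finally have "2 * (2 ^ n * N + 1) \<le> (2 :: nat) ^ (n + (N + 1))"
    by (simp add: power_add)
  moreover have "C ^ 2 ^ n \<le> 2 ^ (r * 2 ^ n)"
    using power_mono[OF assms, of "2 ^ n"] by (simp add: power_mult)
  ultimately have "2 * (2 ^ n * N + 1) * C ^ 2 ^ n \<le> 2 ^ (n + (N + 1)) * 2 ^ (r * 2 ^ n)"
    by (rule mult_mono) simp_all
  also have "\<dots> = 2 ^ (r * 2 ^ n + n + (N + 1))"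
    by (simp only: power_add[symmetric]) (simp add: add_ac)
  finally show ?thesis .
qed

lemma index_codes_drop_leaving_edges:
  fixes A :: "'n::finite \<Rightarrow> 'n set"
  assumes closed: "\<And>u. u \<in> U \<Longrightarrow> A u \<subseteq> U" and code: "index_code_exists A t r"
  obtains c where
    "\<And>n. index_code_exists (drop_leaving_edges U A) (\<lambda>j. 2 ^ n * t j) (r * 2 ^ n + n + c)"
proof -
  obtain \<phi> :: "('n \<Rightarrow> bool list) \<Rightarrow> bool list"
    where \<phi>: "decodable A t \<phi>" "card (\<phi> ` msg_tuples t) \<le> 2 ^ r"
    using decodable_encoder_if_index_code[OF code] .
  interpret closed_side_info A U t \<phi>
    using closed \<phi>(1) by unfold_locales
  define N where "N = card U_parts"
  have "index_code_exists (drop_leaving_edges U A) (\<lambda>j. 2 ^ n * t j) (r * 2 ^ n + n + (N + 1))"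
    for n
  proof -
    obtain col :: "('n \<Rightarrow> bool list) \<Rightarrow> (nat \<Rightarrow> bool list) \<times> (nat \<Rightarrow> bool list)"
      where col: "decodable (drop_leaving_edges U A) (\<lambda>j. 2 ^ n * t j) col"
        "card (col ` msg_tuples (\<lambda>j. 2 ^ n * t j)) \<le> 2 * (2 ^ n * N + 1) * card (\<phi> ` M) ^ 2 ^ n"
      using small_block_colouring[where k = "2 ^ n"] unfolding N_def .
    have "card (col ` msg_tuples (\<lambda>j. 2 ^ n * t j)) \<le> 2 ^ (r * 2 ^ n + n + (N + 1))"
      using col(2) block_code_size_le[OF \<phi>(2)] by (rule order_trans)
    then show ?thesis
      by (rule index_code_exists_if_decodable[OF col(1)])
  qed
  then show thesis
    by (rule that)
qed

text \<open>Rescaling a code for \<open>k = 2 ^ n\<close> blocks costs the rate factor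
  \<open>r * 2 ^ n / (r * 2 ^ n + n + c)\<close>, which tends to \<open>1\<close>.\<close>
lemma capacity_region_drop_leaving_edges:
  fixes A :: "'n::finite \<Rightarrow> 'n set"
  assumes closed: "\<And>u. u \<in> U \<Longrightarrow> A u \<subseteq> U"
  shows "capacity_region (drop_leaving_edges U A) = capacity_region A"
proof
  show "capacity_region (drop_leaving_edges U A) \<subseteq> capacity_region A"
    by (rule capacity_region_mono) (simp add: drop_leaving_edges_def)
  let ?B = "drop_leaving_edges U A"
  have "R \<in> capacity_region ?B" if ach: "achievable A R" for R
  proof -
    obtain t r where R: "\<forall>j. 0 \<le> R $ j" "0 < r" "index_code_exists A t r"
      "\<forall>j. R $ j \<le> real (t j) / real r"
      using ach unfolding achievable_def by blast
    obtain c where codes: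
      "\<And>n. index_code_exists ?B (\<lambda>j. 2 ^ n * t j) (r * 2 ^ n + n + c)"
      using index_codes_drop_leaving_edges[OF closed R(3)] by blast
    define q where "q n = real (r * 2 ^ n) / real (r * 2 ^ n + n + c)" for n
    have "achievable ?B (q n *\<^sub>R R)" for n
      unfolding achievable_def
    proof (intro conjI allI exI)
      fix j
      show "0 \<le> (q n *\<^sub>R R) $ j"
        using R(1) by (simp add: q_def)
      show "0 < r * 2 ^ n + n + c"
        using R(2) by simp
      have "q n * R $ j \<le> q n * (real (t j) / real r)"
        using R(4) by (intro mult_left_mono) (simp_all add: q_def)
      then show "(q n *\<^sub>R R) $ j \<le> real (2 ^ n * t j) / real (r * 2 ^ n + n + c)"
        using R(2) by (simp add: q_def field_simps)
    qed (rule codes)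
    moreover have "(\<lambda>n. q n *\<^sub>R R) \<longlonglongrightarrow> 1 *\<^sub>R R"
      unfolding q_def by (intro tendsto_scaleR tendsto_const tendsto_exp_over_exp_plus_linear R(2))
    ultimately show ?thesis
      unfolding capacity_region_def closure_sequential by (intro exI[of _ "\<lambda>n. q n *\<^sub>R R"]) auto
  qed
  then show "capacity_region A \<subseteq> capacity_region ?B"
    unfolding capacity_region_def[of A] by (intro closure_minimal) (auto simp: capacity_region_def)
qed

lemma side_graph_drop_leaving_edges_subset: "side_graph (drop_leaving_edges U A) \<subseteq> side_graph A"
  unfolding side_graph_def drop_leaving_edges_def by auto

lemma reaches_closed_set:
  assumes closed: "\<And>u. u \<in> U \<Longrightarrow> A u \<subseteq> U"
    and "(a, b) \<in> (side_graph A)\<^sup>*" "b \<in> U"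
  shows "a \<in> U"
  using assms(2,3)
proof (induction rule: converse_rtrancl_induct)
  case (step a y)
  then show ?case
    using closed unfolding side_graph_def by blast
qed

text \<open>No path leads out of \<open>- U\<close> into \<open>U\<close>, so a closed walk never uses an edge leaving \<open>U\<close>.\<close>
lemma rtrancl_side_graph_drop_leaving_edges:
  assumes closed: "\<And>u. u \<in> U \<Longrightarrow> A u \<subseteq> U"
    and "(a, b) \<in> (side_graph A)\<^sup>*" "(b, a) \<in> (side_graph A)\<^sup>*"
  shows "(a, b) \<in> (side_graph (drop_leaving_edges U A))\<^sup>*"
  using assms(2,3)
proof (induction rule: rtrancl_induct)
  case base
  then show ?case by simp
next
  case (step y z)
  have "(y, a) \<in> (side_graph A)\<^sup>*"
    using step.hyps(2) step.prems by (rule converse_rtrancl_into_rtrancl)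
  then have "(a, y) \<in> (side_graph (drop_leaving_edges U A))\<^sup>*"
    by (rule step.IH)
  moreover have "(z, y) \<in> (side_graph A)\<^sup>*"
    using step.prems step.hyps(1) by (rule rtrancl_trans)
  then have "y \<in> U \<Longrightarrow> z \<in> U"
    using reaches_closed_set[of U A, OF closed] by blast
  then have "(y, z) \<in> side_graph (drop_leaving_edges U A)"
    using step.hyps(2) unfolding side_graph_def drop_leaving_edges_def by auto
  ultimately show ?case
    by (rule rtrancl_into_rtrancl)
qed

lemma edge_on_cycle_drop_leaving_edges:
  assumes closed: "\<And>u. u \<in> U \<Longrightarrow> A u \<subseteq> U"
  shows "edge_on_cycle (drop_leaving_edges U A) i j \<longleftrightarrow> edge_on_cycle A i j"
proof
  show "edge_on_cycle A i j" if "edge_on_cycle (drop_leaving_edges U A) i j"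
    using that rtrancl_mono[OF side_graph_drop_leaving_edges_subset] side_graph_drop_leaving_edges_subset
    unfolding edge_on_cycle_def by blast
next
  assume "edge_on_cycle A i j"
  then have ij: "(i, j) \<in> side_graph A" and ji: "(j, i) \<in> (side_graph A)\<^sup>*"
    unfolding edge_on_cycle_def by auto
  have "i \<in> U \<Longrightarrow> j \<in> U"
    using reaches_closed_set[of U A, OF closed ji] .
  then have "(i, j) \<in> side_graph (drop_leaving_edges U A)"
    using ij unfolding side_graph_def drop_leaving_edges_def by auto
  moreover have "(j, i) \<in> (side_graph (drop_leaving_edges U A))\<^sup>*"
    using ji ij by (intro rtrancl_side_graph_drop_leaving_edges[of U A, OF closed]) auto
  ultimately show "edge_on_cycle (drop_leaving_edges U A) i j"
    unfolding edge_on_cycle_def by blast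
qed

lemma prune_acyclic_edges_drop_leaving_edges:
  assumes "\<And>u. u \<in> U \<Longrightarrow> A u \<subseteq> U"
  shows "prune_acyclic_edges (drop_leaving_edges U A) = prune_acyclic_edges A"
  by (rule ext) (simp add: prune_acyclic_edges_def edge_on_cycle_drop_leaving_edges[of U A, OF assms])

lemma capacity_region_prune_acyclic_edges:
  fixes A :: "'n::finite \<Rightarrow> 'n set"
  shows "capacity_region (prune_acyclic_edges A) = capacity_region A"
proof (induction "card (side_graph A)" arbitrary: A rule: less_induct)
  case less
  show ?case
  proof (cases "\<forall>i j. i \<in> A j \<longrightarrow> edge_on_cycle A i j")
    case True
    then have "prune_acyclic_edges A = A"
      unfolding prune_acyclic_edges_def edge_on_cycle_def side_graph_def by auto
    then show ?thesis by simp
  next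
    case False
    then obtain i j where ij: "i \<in> A j" "\<not> edge_on_cycle A i j"
      by blast
    define U where "U = {w. (j, w) \<notin> (side_graph A)\<^sup>*}"
    have closed: "A u \<subseteq> U" if "u \<in> U" for u
      using that unfolding U_def side_graph_def by (auto intro: rtrancl_into_rtrancl)
    have "i \<in> U" "j \<notin> U"
      using ij unfolding U_def edge_on_cycle_def side_graph_def by auto
    then have "(i, j) \<in> side_graph A - side_graph (drop_leaving_edges U A)"
      using ij(1) unfolding side_graph_def drop_leaving_edges_def by auto
    then have "card (side_graph (drop_leaving_edges U A)) < card (side_graph A)"
      using side_graph_drop_leaving_edges_subset by (intro psubset_card_mono) auto
    then have "capacity_region (prune_acyclic_edges (drop_leaving_edges U A))
        = capacity_region (drop_leaving_edges U A)"
      by (rule less)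
    then show ?thesis
      using prune_acyclic_edges_drop_leaving_edges[of U A, OF closed]
        capacity_region_drop_leaving_edges[of U A, OF closed] by simp
  qed
qed

theorem mainTheorem8:
  fixes A :: "'n::finite \<Rightarrow> 'n set"
  assumes "well_formed_ic A"
  shows "capacity_region (prune_acyclic_edges A) = capacity_region A"
  by (rule capacity_region_prune_acyclic_edges)

end
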